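(* Let $p:X\to Y$ be a covering map with finite fibers and with $X$ Hausdorff. Then every open cover $\mathcal V$ of $X$ has a refinement that is a covering structure of $p$.
   Context: A covering map $p:X\to Y$ is a continuous surjection such that every point of $Y$ has an open neighborhood $V$ with $p^{-1}(V)$ a disjoint union of open sets each mapped homeomorphically onto $V$. A slice of $p$ is an open set $U\subseteq X$ such that $p^{-1}(p(U))$ is the disjoint union of a family of open sets $U_s$ ($s\in S$), each mapped by $p$ homeomorphically onto $p(U)$, with $U=U_t$ for some $t\in S$. A covering structure of $p$ is an open cover $\mathcal S$ of $X$ by slices of $p$ such that for every $U\in\mathcal S$, $p^{-1}(p(U))$ is the disjoint union of a family $\{U_j\}_{j\in J}$ of elements of $\mathcal S$, each mapped homeomorphically onto $p(U)$. A refinement of $\mathcal V$ is an open cover each of whose elements is contained in some element of $\mathcal V$. *)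

theory Defs
  imports "HOL-Analysis.Analysis"
begin

definition covering_map :: "'a topology \<Rightarrow> 'b topology \<Rightarrow> ('a \<Rightarrow> 'b) \<Rightarrow> bool" where
  "covering_map X Y p \<longleftrightarrow>
     continuous_map X Y p \<and> p ` topspace X = topspace Y \<and>
     (\<forall>y \<in> topspace Y. \<exists>V. openin Y V \<and> y \<in> V \<and>
        (\<exists>\<U>. \<Union>\<U> = {x \<in> topspace X. p x \<in> V} \<and> pairwise disjnt \<U> \<and>
              (\<forall>W \<in> \<U>. openin X W \<and> homeomorphic_map (subtopology X W) (subtopology Y V) p)))"

definition slice :: "'a topology \<Rightarrow> 'b topology \<Rightarrow> ('a \<Rightarrow> 'b) \<Rightarrow> 'a set \<Rightarrow> bool" where
  "slice X Y p U \<longleftrightarrow> openin X U \<and>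
     (\<exists>\<U>. U \<in> \<U> \<and> \<Union>\<U> = {x \<in> topspace X. p x \<in> p ` U} \<and> pairwise disjnt \<U> \<and>
           (\<forall>W \<in> \<U>. openin X W \<and> homeomorphic_map (subtopology X W) (subtopology Y (p ` U)) p))"

definition open_cover :: "'a topology \<Rightarrow> 'a set set \<Rightarrow> bool" where
  "open_cover X \<C> \<longleftrightarrow> (\<forall>U \<in> \<C>. openin X U) \<and> \<Union>\<C> = topspace X"

definition covering_structure :: "'a topology \<Rightarrow> 'b topology \<Rightarrow> ('a \<Rightarrow> 'b) \<Rightarrow> 'a set set \<Rightarrow> bool" where
  "covering_structure X Y p \<S> \<longleftrightarrow> open_cover X \<S> \<and> (\<forall>U \<in> \<S>. slice X Y p U) \<and>
     (\<forall>U \<in> \<S>. \<exists>\<U> \<subseteq> \<S>. \<Union>\<U> = {x \<in> topspace X. p x \<in> p ` U} \<and> pairwise disjnt \<U> \<and>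
        (\<forall>W \<in> \<U>. homeomorphic_map (subtopology X W) (subtopology Y (p ` U)) p))"

definition refinement :: "'a topology \<Rightarrow> 'a set set \<Rightarrow> 'a set set \<Rightarrow> bool" where
  "refinement X \<W> \<V> \<longleftrightarrow> open_cover X \<W> \<and> (\<forall>W \<in> \<W>. \<exists>V \<in> \<V>. W \<subseteq> V)"

end

theory Submission
  imports Defs
begin

text \<open>Over an evenly covered open set N with sheets W (one for each point of a fibre), shrink N
  to the intersection of the images p(W \<inter> V), where V \<in> \<V> contains the fibre point of W.
  Finiteness of the fibre keeps this intersection open, and injectivity of p on each sheet
  makes the shrunken sheets lie in the chosen members of \<V>. All the families obtained in this
  way, taken together, form the required covering structure.\<close>

definition sheets_over :: "'a topology \<Rightarrow> 'b topology \<Rightarrow> ('a \<Rightarrow> 'b) \<Rightarrow> 'b set \<Rightarrow> 'a set set \<Rightarrow> bool"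
  where "sheets_over X Y p N \<U> \<longleftrightarrow> openin Y N \<and> \<Union>\<U> = {x \<in> topspace X. p x \<in> N} \<and>
     pairwise disjnt \<U> \<and> (\<forall>W\<in>\<U>. openin X W \<and> homeomorphic_map (subtopology X W) (subtopology Y N) p)"

definition subordinate_sheets_over ::
    "'a topology \<Rightarrow> 'b topology \<Rightarrow> ('a \<Rightarrow> 'b) \<Rightarrow> 'a set set \<Rightarrow> 'b set \<Rightarrow> 'a set set \<Rightarrow> bool"
  where "subordinate_sheets_over X Y p \<V> N \<U> \<longleftrightarrow> sheets_over X Y p N \<U> \<and> (\<forall>W\<in>\<U>. \<exists>V\<in>\<V>. W \<subseteq> V)"

lemma covering_map_sheets_over:
  assumes "covering_map X Y p" "y \<in> topspace Y"
  obtains N \<U> where "y \<in> N" "sheets_over X Y p N \<U>"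
  using assms unfolding covering_map_def sheets_over_def by metis

lemma sheet_image:
  assumes "homeomorphic_map (subtopology X W) (subtopology Y N) p" "openin X W" "openin Y N"
  shows "p ` W = N"
  using homeomorphic_imp_surjective_map[OF assms(1)] openin_subset[OF assms(2)] openin_subset[OF assms(3)]
  by (simp add: Int_absorb1)

lemma sheet_inj_on:
  assumes "homeomorphic_map (subtopology X W) (subtopology Y N) p" "openin X W"
  shows "inj_on p W"
  using homeomorphic_imp_injective_map[OF assms(1)] openin_subset[OF assms(2)]
  by (simp add: Int_absorb1)

lemma sheet_openin_image:
  assumes "homeomorphic_map (subtopology X W) (subtopology Y N) p" "openin Y N"
    and "openin X U" "U \<subseteq> W"
  shows "openin Y (p ` U)"
proof -
  have "openin (subtopology X W) U"
    unfolding openin_subtopology using assms(3,4) by blast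
  then have "openin (subtopology Y N) (p ` U)"
    using homeomorphic_map_openness[OF assms(1)] openin_subset[OF assms(3)] assms(4) by auto
  then show ?thesis
    using assms(2) openin_trans_full by blast
qed

lemma sheets_over_image:
  assumes "sheets_over X Y p N \<U>" "W \<in> \<U>"
  shows "p ` W = N"
  using assms sheet_image unfolding sheets_over_def by blast

lemma sheets_over_restrict:
  assumes "sheets_over X Y p N \<U>" "continuous_map X Y p" "openin Y N'" "N' \<subseteq> N"
  shows "sheets_over X Y p N' ((\<lambda>W. {x \<in> W. p x \<in> N'}) ` \<U>)"
  unfolding sheets_over_def
proof (intro conjI ballI)
  have \<U>: "\<Union>\<U> = {x \<in> topspace X. p x \<in> N}" "pairwise disjnt \<U>"
    and sheet: "\<And>W. W \<in> \<U> \<Longrightarrow> openin X W \<and> homeomorphic_map (subtopology X W) (subtopology Y N) p"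
    using assms(1) unfolding sheets_over_def by auto
  show "openin Y N'" by (fact assms(3))
  show "\<Union>((\<lambda>W. {x \<in> W. p x \<in> N'}) ` \<U>) = {x \<in> topspace X. p x \<in> N'}"
    using \<U>(1) assms(4) by auto
  show "pairwise disjnt ((\<lambda>W. {x \<in> W. p x \<in> N'}) ` \<U>)"
    using \<U>(2) unfolding pairwise_def disjnt_def by blast
  fix W' assume "W' \<in> (\<lambda>W. {x \<in> W. p x \<in> N'}) ` \<U>"
  then obtain W where W: "W \<in> \<U>" and W': "W' = {x \<in> W. p x \<in> N'}" by blast
  have oW: "openin X W" and hom: "homeomorphic_map (subtopology X W) (subtopology Y N) p"
    using sheet[OF W] by auto
  have WX: "W \<subseteq> topspace X" and NY: "N \<subseteq> topspace Y"
    using oW assms(1) openin_subset unfolding sheets_over_def by auto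
  have W'_eq: "W' = W \<inter> {x \<in> topspace X. p x \<in> N'}"
    using W' WX by auto
  show "openin X W'"
    unfolding W'_eq using oW openin_continuous_map_preimage[OF assms(2,3)] by blast
  have "p ` (W \<inter> W') = N \<inter> N'"
    using sheet_image[OF hom oW] assms(1) W' unfolding sheets_over_def by auto
  then have "homeomorphic_map (subtopology (subtopology X W) W') (subtopology (subtopology Y N) N') p"
    using homeomorphic_map_subtopologies[OF hom] WX NY by (simp add: Int_absorb1)
  then show "homeomorphic_map (subtopology X W') (subtopology Y N') p"
    using W' assms(4) by (simp add: subtopology_subtopology Int_absorb1 Int_absorb2)
qed

lemma subordinate_sheets_over_exist:
  assumes cov: "covering_map X Y p"
    and fin: "\<And>y. y \<in> topspace Y \<Longrightarrow> finite {x \<in> topspace X. p x = y}"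
    and \<V>: "open_cover X \<V>"
    and x: "x \<in> topspace X"
  obtains N \<U> where "subordinate_sheets_over X Y p \<V> N \<U>" "x \<in> \<Union>\<U>"
proof -
  define y where "y = p x"
  have cont: "continuous_map X Y p" and y: "y \<in> topspace Y"
    using cov x unfolding covering_map_def y_def by auto
  obtain V \<U> where yV: "y \<in> V" and \<U>: "sheets_over X Y p V \<U>"
    using covering_map_sheets_over[OF cov y] by blast
  have oV: "openin Y V" and \<U>_union: "\<Union>\<U> = {x \<in> topspace X. p x \<in> V}" and \<U>_disj: "pairwise disjnt \<U>"
    and sheet: "\<And>W. W \<in> \<U> \<Longrightarrow> openin X W \<and> homeomorphic_map (subtopology X W) (subtopology Y V) p"
    using \<U> unfolding sheets_over_def by auto
  define F where "F = {z \<in> topspace X. p z = y}"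
  have xF: "x \<in> F" using x unfolding F_def y_def by simp
  have "\<forall>z\<in>F. \<exists>W. W \<in> \<U> \<and> z \<in> W"
    using \<U>_union yV unfolding F_def by auto
  then obtain Wz where Wz: "\<And>z. z \<in> F \<Longrightarrow> Wz z \<in> \<U> \<and> z \<in> Wz z"
    by metis
  have "\<forall>z\<in>F. \<exists>V'. V' \<in> \<V> \<and> z \<in> V'"
    using \<V> unfolding open_cover_def F_def by auto
  then obtain Vz where Vz: "\<And>z. z \<in> F \<Longrightarrow> Vz z \<in> \<V> \<and> z \<in> Vz z"
    by metis
  define N where "N = V \<inter> (\<Inter>z\<in>F. p ` (Wz z \<inter> Vz z))"
  have "openin Y (p ` (Wz z \<inter> Vz z))" if "z \<in> F" for z
    using Wz[OF that] Vz[OF that] sheet \<V> oV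
    by (intro sheet_openin_image[of X "Wz z" Y V]) (auto simp: open_cover_def)
  then have oN: "openin Y N"
    unfolding N_def using fin[OF y] xF oV unfolding F_def by (intro openin_Int openin_Inter) auto
  have yN: "y \<in> N"
    unfolding N_def using yV Wz Vz F_def by auto
  define \<U>' where "\<U>' = (\<lambda>W. {x \<in> W. p x \<in> N}) ` \<U>"
  have \<U>': "sheets_over X Y p N \<U>'"
    unfolding \<U>'_def using sheets_over_restrict[OF \<U> cont oN] N_def by blast
  have "\<exists>V'\<in>\<V>. W' \<subseteq> V'" if W'_in: "W' \<in> \<U>'" for W'
  proof -
    obtain W where W: "W \<in> \<U>" and W': "W' = {x \<in> W. p x \<in> N}"
      using W'_in unfolding \<U>'_def by blast
    obtain z where z: "z \<in> W" "p z = y"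
      using sheets_over_image[OF \<U> W] yV by blast
    have zF: "z \<in> F"
      using z sheet[OF W] openin_subset unfolding F_def by blast
    have "Wz z = W"
      using \<U>_disj Wz[OF zF] W z unfolding pairwise_def disjnt_def by blast
    then have "W' \<subseteq> {w \<in> W. p w \<in> p ` (W \<inter> Vz z)}"
      using W' zF unfolding N_def by auto
    also have "\<dots> \<subseteq> Vz z"
      using sheet_inj_on[of X W Y V p] sheet[OF W] by (auto dest: inj_onD)
    finally show ?thesis
      using Vz[OF zF] by blast
  qed
  moreover have "x \<in> \<Union>\<U>'"
    using Wz[OF xF] yN unfolding \<U>'_def y_def by blast
  ultimately show ?thesis
    using that \<U>' unfolding subordinate_sheets_over_def by blast
qed

lemma covering_structure_Union_subordinate_sheets:
  assumes "\<And>x. x \<in> topspace X \<Longrightarrow> \<exists>N \<U>. subordinate_sheets_over X Y p \<V> N \<U> \<and> x \<in> \<Union>\<U>"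
  defines "\<S> \<equiv> \<Union>{\<U>. \<exists>N. subordinate_sheets_over X Y p \<V> N \<U>}"
  shows "refinement X \<S> \<V>" "covering_structure X Y p \<S>"
proof -
  have member: "\<exists>N \<U>. subordinate_sheets_over X Y p \<V> N \<U> \<and> U \<in> \<U>" if "U \<in> \<S>" for U
    using that unfolding \<S>_def by blast
  have open_sub: "openin X U \<and> (\<exists>V\<in>\<V>. U \<subseteq> V)" if "U \<in> \<S>" for U
    using member[OF that] unfolding subordinate_sheets_over_def sheets_over_def by blast
  have cover: "open_cover X \<S>"
    unfolding open_cover_def
  proof
    show "\<Union>\<S> = topspace X"
    proof
      show "\<Union>\<S> \<subseteq> topspace X"
        using open_sub openin_subset by (meson Sup_least)
      show "topspace X \<subseteq> \<Union>\<S>"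
      proof
        fix x assume "x \<in> topspace X"
        then obtain N \<U> where "subordinate_sheets_over X Y p \<V> N \<U>" "x \<in> \<Union>\<U>"
          using assms(1) by blast
        then show "x \<in> \<Union>\<S>"
          unfolding \<S>_def by blast
      qed
    qed
  qed (use open_sub in blast)
  then show "refinement X \<S> \<V>"
    unfolding refinement_def using open_sub by blast
  have "slice X Y p U \<and> (\<exists>\<U>\<subseteq>\<S>. \<Union>\<U> = {x \<in> topspace X. p x \<in> p ` U} \<and> pairwise disjnt \<U> \<and>
          (\<forall>W\<in>\<U>. homeomorphic_map (subtopology X W) (subtopology Y (p ` U)) p))" if U_in: "U \<in> \<S>" for U
  proof -
    obtain N \<U> where \<U>: "subordinate_sheets_over X Y p \<V> N \<U>" and U: "U \<in> \<U>"
      using member[OF U_in] by blast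
    have sheets: "sheets_over X Y p N \<U>" and sub: "\<U> \<subseteq> \<S>"
      using \<U> unfolding subordinate_sheets_over_def \<S>_def by blast+
    have pU: "p ` U = N"
      using sheets_over_image[OF sheets U] .
    have union: "\<Union>\<U> = {x \<in> topspace X. p x \<in> N}" and disj: "pairwise disjnt \<U>"
      and sheet: "\<forall>W\<in>\<U>. openin X W \<and> homeomorphic_map (subtopology X W) (subtopology Y N) p"
      using sheets unfolding sheets_over_def by auto
    have "slice X Y p U"
      unfolding slice_def pU using open_sub[OF U_in] U union disj sheet
      by (intro conjI exI[of _ \<U>]) auto
    moreover have "\<exists>\<U>\<subseteq>\<S>. \<Union>\<U> = {x \<in> topspace X. p x \<in> N} \<and> pairwise disjnt \<U> \<and>
          (\<forall>W\<in>\<U>. homeomorphic_map (subtopology X W) (subtopology Y N) p)"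
      using sub union disj sheet by (intro exI[of _ \<U>]) auto
    ultimately show ?thesis
      unfolding pU ..
  qed
  then show "covering_structure X Y p \<S>"
    unfolding covering_structure_def using cover by simp
qed

theorem lemma4p10:
  fixes X :: "'a topology" and Y :: "'b topology" and p :: "'a \<Rightarrow> 'b"
  assumes "covering_map X Y p"
    and "\<And>y. y \<in> topspace Y \<Longrightarrow> finite {x \<in> topspace X. p x = y}"
    and "Hausdorff_space X"
    and "open_cover X \<V>"
  shows "\<exists>\<S>. refinement X \<S> \<V> \<and> covering_structure X Y p \<S>"
proof -
  have "\<exists>N \<U>. subordinate_sheets_over X Y p \<V> N \<U> \<and> x \<in> \<Union>\<U>" if "x \<in> topspace X" for x
    using subordinate_sheets_over_exist[OF assms(1,2,4) that] by blast
  then show ?thesis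
    using covering_structure_Union_subordinate_sheets by blast
qed

end
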